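(* Let $S,T$ be ordered trees, let $f\colon T\to S$ be a rigid surjection, and let $x$ be a leaf of $S$. Let $y$ be the leaf of $T$ that is $f$-conjugate to $x$. Then the image of $f_x=f\upharpoonright T^y$ equals $S^x$, and $f_x\colon T^y\to S^x$ is a rigid surjection.
   Context: A tree is a finite, non-empty poset $(T,\sqsubseteq_T)$ with a smallest element (root) in which the predecessors of each element form a chain (each element is its own predecessor); $v\wedge_T w$ is the largest common predecessor. An ordered tree has a fixed linear order on the immediate successors of each node, inducing the lexicographic linear order $\leq_T$: $v\leq_T w$ if $v\sqsubseteq_T w$, and for incomparable $v,w$, $v\leq_T w$ iff the immediate successor of $v\wedge_T w$ below $v$ precedes the one below $w$. A morphism preserves $\wedge$, is $\leq$-monotone and maps root to root; an embedding is an injective morphism. A function $f\colon T\to S$ is a rigid surjection if there is a morphism $e\colon S\to T$ (unique, called the injection of $f$) with $f\circ e={\rm id}_S$ and $e(f(w))\sqsubseteq_T w$ for all $w$. For $v\in T$, $T^v=\{w\in T\mid w\leq_T v\}$ (ordered tree with inherited orders). A leaf is a $\sqsubseteq$-maximal node. For an embedding $i\colon S\to T$, a leaf $y$ of $T$ is $i$-conjugate to a leaf $x$ of $S$ if: (i) when $x$ is the $\leq_S$-largest leaf of $S$, $y$ is the $\leq_T$-largest leaf of $T$; (ii) otherwise, with $x'$ the $\leq_S$-smallest leaf with $x<_S x'$, $y$ is the $\leq_T$-largest leaf with $y<_T i(x')$ and $i(x)\wedge_T i(x')=y\wedge_T i(x')$. A leaf $y$ of $T$ is $f$-conjugate to $x$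 if it is $i$-conjugate to $x$ for $i$ the injection of $f$ (such $y$ exists and is unique). *)

theory Defs
  imports Main
begin

text \<open>An ordered tree: a carrier set, the tree order (\<sqsubseteq>), and a sibling order
  which is a linear order on the set of immediate successors of each node.\<close>

record 'a otree =
  carrier :: "'a set"
  tle :: "'a \<Rightarrow> 'a \<Rightarrow> bool"
  sib :: "'a \<Rightarrow> 'a \<Rightarrow> bool"

definition is_tree :: "'a otree \<Rightarrow> bool" where
  "is_tree T \<longleftrightarrow>
     finite (carrier T) \<and> carrier T \<noteq> {} \<and>
     (\<forall>v\<in>carrier T. tle T v v) \<and>
     (\<forall>v\<in>carrier T. \<forall>w\<in>carrier T. tle T v w \<and> tle T w v \<longrightarrow> v = w) \<and>
     (\<forall>u\<in>carrier T. \<forall>v\<in>carrier T. \<forall>w\<in>carrier T. tle T u v \<and> tle T v w \<longrightarrow> tle T u w) \<and>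
     (\<exists>r\<in>carrier T. \<forall>v\<in>carrier T. tle T r v) \<and>
     (\<forall>w\<in>carrier T. \<forall>u\<in>carrier T. \<forall>v\<in>carrier T.
        tle T u w \<and> tle T v w \<longrightarrow> tle T u v \<or> tle T v u)"

definition isucc :: "'a otree \<Rightarrow> 'a \<Rightarrow> 'a \<Rightarrow> bool" where
  "isucc T v w \<longleftrightarrow> v \<in> carrier T \<and> w \<in> carrier T \<and> tle T v w \<and> v \<noteq> w \<and>
     \<not> (\<exists>u\<in>carrier T. tle T v u \<and> tle T u w \<and> u \<noteq> v \<and> u \<noteq> w)"

definition ordered_tree :: "'a otree \<Rightarrow> bool" where
  "ordered_tree T \<longleftrightarrow> is_tree T \<and>
     (\<forall>v\<in>carrier T.
        (\<forall>a. isucc T v a \<longrightarrow> sib T a a) \<and>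
        (\<forall>a b. isucc T v a \<and> isucc T v b \<and> sib T a b \<and> sib T b a \<longrightarrow> a = b) \<and>
        (\<forall>a b c. isucc T v a \<and> isucc T v b \<and> isucc T v c \<and> sib T a b \<and> sib T b c
                   \<longrightarrow> sib T a c) \<and>
        (\<forall>a b. isucc T v a \<and> isucc T v b \<longrightarrow> sib T a b \<or> sib T b a))"

definition root :: "'a otree \<Rightarrow> 'a" where
  "root T = (THE r. r \<in> carrier T \<and> (\<forall>v\<in>carrier T. tle T r v))"

definition meet :: "'a otree \<Rightarrow> 'a \<Rightarrow> 'a \<Rightarrow> 'a" where
  "meet T v w = (THE m. m \<in> carrier T \<and> tle T m v \<and> tle T m w \<and>
      (\<forall>u\<in>carrier T. tle T u v \<and> tle T u w \<longrightarrow> tle T u m))"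

definition succ_toward :: "'a otree \<Rightarrow> 'a \<Rightarrow> 'a \<Rightarrow> 'a" where
  "succ_toward T m v = (THE c. isucc T m c \<and> tle T c v)"

definition lex :: "'a otree \<Rightarrow> 'a \<Rightarrow> 'a \<Rightarrow> bool" where
  "lex T v w \<longleftrightarrow> tle T v w \<or>
     (\<not> tle T v w \<and> \<not> tle T w v \<and>
      sib T (succ_toward T (meet T v w) v) (succ_toward T (meet T v w) w))"

definition lex_less :: "'a otree \<Rightarrow> 'a \<Rightarrow> 'a \<Rightarrow> bool" where
  "lex_less T v w \<longleftrightarrow> lex T v w \<and> v \<noteq> w"

definition morphism :: "'a otree \<Rightarrow> 'b otree \<Rightarrow> ('a \<Rightarrow> 'b) \<Rightarrow> bool" where
  "morphism T S f \<longleftrightarrow>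
     (\<forall>v\<in>carrier T. f v \<in> carrier S) \<and>
     (\<forall>v\<in>carrier T. \<forall>w\<in>carrier T. f (meet T v w) = meet S (f v) (f w)) \<and>
     (\<forall>v\<in>carrier T. \<forall>w\<in>carrier T. lex T v w \<longrightarrow> lex S (f v) (f w)) \<and>
     f (root T) = root S"

definition embedding :: "'a otree \<Rightarrow> 'b otree \<Rightarrow> ('a \<Rightarrow> 'b) \<Rightarrow> bool" where
  "embedding T S f \<longleftrightarrow> morphism T S f \<and> inj_on f (carrier T)"

definition injection_of :: "'b otree \<Rightarrow> 'a otree \<Rightarrow> ('b \<Rightarrow> 'a) \<Rightarrow> ('a \<Rightarrow> 'b) \<Rightarrow> bool" where
  "injection_of T S f e \<longleftrightarrow> morphism S T e \<and>
     (\<forall>s\<in>carrier S. f (e s) = s) \<and>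
     (\<forall>w\<in>carrier T. tle T (e (f w)) w)"

definition rigid_surj :: "'b otree \<Rightarrow> 'a otree \<Rightarrow> ('b \<Rightarrow> 'a) \<Rightarrow> bool" where
  "rigid_surj T S f \<longleftrightarrow> (\<forall>w\<in>carrier T. f w \<in> carrier S) \<and> (\<exists>e. injection_of T S f e)"

definition subtree_upto :: "'a otree \<Rightarrow> 'a \<Rightarrow> 'a otree" where
  "subtree_upto T v = T\<lparr>carrier := {w \<in> carrier T. lex T w v}\<rparr>"

definition leaf :: "'a otree \<Rightarrow> 'a \<Rightarrow> bool" where
  "leaf T v \<longleftrightarrow> v \<in> carrier T \<and> (\<forall>w\<in>carrier T. tle T v w \<longrightarrow> w = v)"

definition i_conjugate ::
  "'a otree \<Rightarrow> 'b otree \<Rightarrow> ('a \<Rightarrow> 'b) \<Rightarrow> 'a \<Rightarrow> 'b \<Rightarrow> bool" where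
  "i_conjugate S T i x y \<longleftrightarrow> leaf S x \<and> leaf T y \<and>
     (if (\<forall>z. leaf S z \<longrightarrow> lex S z x)
      then (\<forall>z. leaf T z \<longrightarrow> lex T z y)
      else (\<exists>x'. leaf S x' \<and> lex_less S x x' \<and>
                 (\<forall>z. leaf S z \<and> lex_less S x z \<longrightarrow> lex S x' z) \<and>
                 lex_less T y (i x') \<and> meet T (i x) (i x') = meet T y (i x') \<and>
                 (\<forall>z. leaf T z \<and> lex_less T z (i x') \<and>
                      meet T (i x) (i x') = meet T z (i x') \<longrightarrow> lex T z y)))"

text \<open>\<open>y\<close> is \<open>f\<close>-conjugate to \<open>x\<close> (the injection of \<open>f\<close> is unique on the carrier).\<close>
definition f_conjugate ::
  "'b otree \<Rightarrow> 'a otree \<Rightarrow> ('b \<Rightarrow> 'a) \<Rightarrow> 'a \<Rightarrow> 'b \<Rightarrow> bool" where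
  "f_conjugate T S f x y \<longleftrightarrow> (\<exists>e. injection_of T S f e \<and> i_conjugate S T e x y)"

end

theory Submission
  imports Defs
begin

text \<open>
  The injection \<open>e\<close> of \<open>f\<close> is an embedding, and the conjugate leaf \<open>y\<close> is characterised
  by \<open>e s \<le>\<^sub>T y \<longleftrightarrow> s \<le>\<^sub>S x\<close> for all \<open>s \<in> S\<close>. Hence \<open>e\<close> maps \<open>S\<^sup>x\<close> into \<open>T\<^sup>y\<close>, and
  \<open>f\<close> maps \<open>T\<^sup>y\<close> into \<open>S\<^sup>x\<close> because \<open>e (f w) \<sqsubseteq> w\<close>. Initial segments of the
  lexicographic order are downward closed, and restricting a tree to a downward closed set
  changes neither the root, nor meets, nor the lexicographic order, so \<open>f\<close> and \<open>e\<close> restrict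
  to a rigid surjection and its injection.
  The characterisation of \<open>y\<close> rests on the fact that two incomparable nodes are compared
  at the immediate successors of their meet: all nodes of one branch above a meet compare
  alike with every node outside that branch.
\<close>

lemma finite_has_maximal_rel:
  assumes "finite A" "A \<noteq> {}" "transp_on A r" "antisymp_on A r"
  shows "\<exists>m\<in>A. \<forall>a\<in>A. r m a \<longrightarrow> a = m"
  using assms
proof (induction A rule: finite_ne_induct)
  case (singleton x)
  then show ?case by blast
next
  case (insert x F)
  then obtain m where m: "m \<in> F" "\<forall>a\<in>F. r m a \<longrightarrow> a = m"
    using transp_on_subset antisymp_on_subset by (metis subset_insertI)
  show ?case
  proof (cases "r m x")
    case True
    have "a = x" if "a \<in> F" "r x a" for a
    proof -
      have "r m a" using transp_onD[OF insert.prems(1)] True that m(1) by blast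
      with m that have "a = m" by blast
      with True that antisymp_onD[OF insert.prems(2)] m(1) show "a = x" by blast
    qed
    then show ?thesis by blast
  next
    case False
    then show ?thesis using m by blast
  qed
qed

lemma tle_imp_lex: "tle T v w \<Longrightarrow> lex T v w"
  unfolding lex_def by blast

lemma leaf_in_carrier: "leaf T x \<Longrightarrow> x \<in> carrier T"
  unfolding leaf_def by blast

locale tree =
  fixes T :: "'a otree"
  assumes is_tree: "is_tree T"
begin

lemma finite_carrier: "finite (carrier T)"
  using is_tree by (simp add: is_tree_def)

lemma tle_refl: "v \<in> carrier T \<Longrightarrow> tle T v v"
  using is_tree by (simp add: is_tree_def)

lemma tle_antisym: "\<lbrakk>v \<in> carrier T; w \<in> carrier T; tle T v w; tle T w v\<rbrakk> \<Longrightarrow> v = w"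
  using is_tree unfolding is_tree_def by blast

lemma tle_trans:
  "\<lbrakk>u \<in> carrier T; v \<in> carrier T; w \<in> carrier T; tle T u v; tle T v w\<rbrakk> \<Longrightarrow> tle T u w"
  using is_tree unfolding is_tree_def by blast

lemma tle_chain:
  "\<lbrakk>u \<in> carrier T; v \<in> carrier T; w \<in> carrier T; tle T u w; tle T v w\<rbrakk> \<Longrightarrow> tle T u v \<or> tle T v u"
  using is_tree unfolding is_tree_def by blast

lemma root_unique: "\<lbrakk>r \<in> carrier T; \<forall>v\<in>carrier T. tle T r v\<rbrakk> \<Longrightarrow> root T = r"
  unfolding root_def by (rule the_equality) (use tle_antisym in blast)+

lemma
  shows root_in_carrier: "root T \<in> carrier T"
    and root_tle: "v \<in> carrier T \<Longrightarrow> tle T (root T) v"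
proof -
  have "\<exists>r\<in>carrier T. \<forall>v\<in>carrier T. tle T r v"
    using is_tree unfolding is_tree_def by (elim conjE)
  then obtain r where "r \<in> carrier T" "\<forall>v\<in>carrier T. tle T r v" by blast
  moreover from this have "root T = r" by (rule root_unique)
  ultimately show "root T \<in> carrier T" "v \<in> carrier T \<Longrightarrow> tle T (root T) v" by simp_all
qed

lemma has_maximal:
  assumes "A \<subseteq> carrier T" "A \<noteq> {}"
  obtains m where "m \<in> A" "\<And>a. a \<in> A \<Longrightarrow> tle T m a \<Longrightarrow> a = m"
proof -
  have "\<exists>m\<in>A. \<forall>a\<in>A. tle T m a \<longrightarrow> a = m"
  proof (rule finite_has_maximal_rel)
    show "finite A" using assms(1) finite_carrier by (rule finite_subset)
    show "transp_on A (tle T)" unfolding transp_on_def by (meson assms(1) subsetD tle_trans)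
    show "antisymp_on A (tle T)" unfolding antisymp_on_def by (meson assms(1) subsetD tle_antisym)
  qed (rule assms(2))
  with that show thesis by blast
qed

lemma has_minimal:
  assumes "A \<subseteq> carrier T" "A \<noteq> {}"
  obtains m where "m \<in> A" "\<And>a. a \<in> A \<Longrightarrow> tle T a m \<Longrightarrow> a = m"
proof -
  have "\<exists>m\<in>A. \<forall>a\<in>A. tle T a m \<longrightarrow> a = m"
  proof (rule finite_has_maximal_rel)
    show "finite A" using assms(1) finite_carrier by (rule finite_subset)
    show "transp_on A (\<lambda>a b. tle T b a)" unfolding transp_on_def by (meson assms(1) subsetD tle_trans)
    show "antisymp_on A (\<lambda>a b. tle T b a)" unfolding antisymp_on_def by (meson assms(1) subsetD tle_antisym)
  qed (rule assms(2))
  with that show thesis by blast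
qed

lemma meet_eqI:
  assumes "v \<in> carrier T" "w \<in> carrier T" "m \<in> carrier T" "tle T m v" "tle T m w"
    and "\<And>u. \<lbrakk>u \<in> carrier T; tle T u v; tle T u w\<rbrakk> \<Longrightarrow> tle T u m"
  shows "meet T v w = m"
  unfolding meet_def by (rule the_equality) (use assms tle_antisym in blast)+

lemma
  assumes "v \<in> carrier T" "w \<in> carrier T"
  shows meet_in_carrier: "meet T v w \<in> carrier T"
    and meet_tle_left: "tle T (meet T v w) v"
    and meet_tle_right: "tle T (meet T v w) w"
    and meet_greatest: "\<lbrakk>u \<in> carrier T; tle T u v; tle T u w\<rbrakk> \<Longrightarrow> tle T u (meet T v w)"
proof -
  let ?P = "{u \<in> carrier T. tle T u v \<and> tle T u w}"
  have "root T \<in> ?P" using assms root_in_carrier root_tle by blast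
  then obtain m where m: "m \<in> ?P" and max: "\<And>u. u \<in> ?P \<Longrightarrow> tle T m u \<Longrightarrow> u = m"
    using has_maximal[of ?P] by blast
  have greatest: "tle T u m" if "u \<in> ?P" for u
    using tle_chain[of u m v] max[of u] that m assms tle_refl by blast
  have "meet T v w = m"
    using meet_eqI assms m greatest by blast
  with m greatest show "meet T v w \<in> carrier T" "tle T (meet T v w) v" "tle T (meet T v w) w"
    "\<lbrakk>u \<in> carrier T; tle T u v; tle T u w\<rbrakk> \<Longrightarrow> tle T u (meet T v w)" by auto
qed

lemma meet_absorb: "\<lbrakk>v \<in> carrier T; w \<in> carrier T; tle T v w\<rbrakk> \<Longrightarrow> meet T v w = v"
  by (rule meet_eqI) (auto intro: tle_refl)

lemma meet_commute: "meet T v w = meet T w v"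
  unfolding meet_def by (simp add: conj_ac)

lemma isucc_below:
  assumes "isucc T m a" "c \<in> carrier T" "v \<in> carrier T"
    and "tle T m c" "m \<noteq> c" "tle T a v" "tle T c v"
  shows "tle T a c"
proof -
  have "a \<in> carrier T" using assms(1) unfolding isucc_def by blast
  then have "tle T a c \<or> tle T c a" using assms tle_chain by blast
  moreover have "tle T c a \<Longrightarrow> c = a" using assms(1-5) unfolding isucc_def by blast
  ultimately show ?thesis using assms(2) tle_refl by blast
qed

lemma succ_toward_eq:
  assumes "isucc T m a" "tle T a v" "v \<in> carrier T"
  shows "succ_toward T m v = a"
  unfolding succ_toward_def
proof (rule the_equality)
  fix b assume b: "isucc T m b \<and> tle T b v"
  then have "tle T a b \<or> tle T b a"
    using assms tle_chain[of a b v] unfolding isucc_def by blast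
  with assms(1) b show "b = a" unfolding isucc_def by blast
qed (use assms in blast)

lemma
  assumes "m \<in> carrier T" "v \<in> carrier T" "tle T m v" "m \<noteq> v"
  shows isucc_succ_toward: "isucc T m (succ_toward T m v)"
    and succ_toward_tle: "tle T (succ_toward T m v) v"
proof -
  let ?P = "{c \<in> carrier T. tle T m c \<and> m \<noteq> c \<and> tle T c v}"
  have "v \<in> ?P" using assms tle_refl by blast
  then obtain a where a: "a \<in> ?P" and min: "\<And>c. c \<in> ?P \<Longrightarrow> tle T c a \<Longrightarrow> c = a"
    using has_minimal[of ?P] by blast
  have "u \<in> ?P" if "u \<in> carrier T" "tle T m u" "tle T u a" "u \<noteq> m" for u
    using that a assms(2) tle_trans[of u a v] by auto
  then have "isucc T m a"
    unfolding isucc_def using a min assms(1) by auto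
  moreover from this have "succ_toward T m v = a"
    using a assms(2) by (intro succ_toward_eq) auto
  ultimately show "isucc T m (succ_toward T m v)" "tle T (succ_toward T m v) v"
    using a by auto
qed

lemma leaf_above:
  assumes "v \<in> carrier T"
  obtains z where "leaf T z" "tle T v z"
proof -
  let ?A = "{c \<in> carrier T. tle T v c}"
  have "v \<in> ?A" using assms tle_refl by blast
  then obtain z where z: "z \<in> ?A" and max: "\<And>c. c \<in> ?A \<Longrightarrow> tle T z c \<Longrightarrow> c = z"
    using has_maximal[of ?A] by blast
  have "w \<in> ?A" if "w \<in> carrier T" "tle T z w" for w
    using that z assms tle_trans[of v z w] by blast
  then have "leaf T z" unfolding leaf_def using z max by blast
  with z that show thesis by blast
qed

lemma isucc_comparable_eq: "\<lbrakk>isucc T m a; isucc T m b; tle T a b\<rbrakk> \<Longrightarrow> a = b"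
  unfolding isucc_def by blast

lemma
  assumes ma: "isucc T m a" and mb: "isucc T m b" and "a \<noteq> b"
    and v: "v \<in> carrier T" and w: "w \<in> carrier T" and av: "tle T a v" and bw: "tle T b w"
  shows branches_incomparable: "\<not> tle T v w \<and> \<not> tle T w v"
    and meet_branches: "meet T v w = m"
proof -
  have m: "m \<in> carrier T" "tle T m a" "tle T m b" and a: "a \<in> carrier T" and b: "b \<in> carrier T"
    using ma mb unfolding isucc_def by blast+
  have "tle T a b \<or> tle T b a" if "tle T a u" "tle T b u" "u \<in> carrier T" for u
    using tle_chain[OF a b that(3)] that by blast
  then have aw: "\<not> tle T a w" and bv: "\<not> tle T b v"
    using isucc_comparable_eq[OF ma mb] isucc_comparable_eq[OF mb ma] \<open>a \<noteq> b\<close> v w av bw by metis+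
  show "\<not> tle T v w \<and> \<not> tle T w v"
    using tle_trans[OF a v w] tle_trans[OF b w v] av bw aw bv by blast
  show "meet T v w = m"
  proof (rule meet_eqI[OF v w m(1)])
    show "tle T m v" "tle T m w"
      using tle_trans[OF m(1) a v] tle_trans[OF m(1) b w] m av bw by blast+
    fix u assume u: "u \<in> carrier T" "tle T u v" "tle T u w"
    have "tle T u a"
      using tle_chain[OF u(1) a v] u av aw tle_trans[OF a u(1) w] by blast
    moreover have "u \<noteq> a" using u aw by blast
    moreover have "tle T u m \<or> tle T m u" using tle_chain[OF u(1) m(1) a] \<open>tle T u a\<close> m by blast
    ultimately show "tle T u m" using ma u(1) unfolding isucc_def by blast
  qed
qed

lemma branches_of_incomparable:
  assumes v: "v \<in> carrier T" and w: "w \<in> carrier T" and "\<not> tle T v w" "\<not> tle T w v"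
  obtains a b where "isucc T (meet T v w) a" "isucc T (meet T v w) b" "a \<noteq> b"
    "tle T a v" "tle T b w"
proof -
  let ?m = "meet T v w" and ?a = "succ_toward T (meet T v w) v" and ?b = "succ_toward T (meet T v w) w"
  have m: "?m \<in> carrier T" "tle T ?m v" "tle T ?m w"
    using meet_in_carrier meet_tle_left meet_tle_right v w by blast+
  have "?m \<noteq> v" "?m \<noteq> w" using m assms by auto
  then have a: "isucc T ?m ?a" "tle T ?a v" and b: "isucc T ?m ?b" "tle T ?b w"
    using isucc_succ_toward succ_toward_tle m v w by blast+
  have "?a \<noteq> ?b"
  proof
    assume "?a = ?b"
    then have "tle T ?a ?m"
      using meet_greatest[OF v w] a b unfolding isucc_def by auto
    with a(1) m(1) show False unfolding isucc_def using tle_antisym by blast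
  qed
  with a b that show thesis by blast
qed

lemma lex_branches:
  assumes "isucc T m a" "isucc T m b" "a \<noteq> b" "v \<in> carrier T" "w \<in> carrier T"
    "tle T a v" "tle T b w"
  shows "lex T v w \<longleftrightarrow> sib T a b"
  using branches_incomparable[OF assms] meet_branches[OF assms]
    succ_toward_eq[OF assms(1,6,4)] succ_toward_eq[OF assms(2,7,5)]
  unfolding lex_def by simp

text \<open>Both \<open>v\<close> and \<open>w\<close> leave \<open>meet T v p\<close> through the immediate successor below \<open>u\<close>.\<close>

lemma
  assumes p: "p \<in> carrier T" and v: "v \<in> carrier T" and u: "u \<in> carrier T" and w: "w \<in> carrier T"
    and incomp: "\<not> tle T v p" "\<not> tle T p v"
    and above: "tle T (meet T v p) u" "meet T v p \<noteq> u" and uv: "tle T u v" and uw: "tle T u w"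
  shows same_branch_meet: "meet T w p = meet T v p"
    and same_branch_incomparable: "\<not> tle T w p \<and> \<not> tle T p w"
    and same_branch_lex_left: "lex T w p \<longleftrightarrow> lex T v p"
    and same_branch_lex_right: "lex T p w \<longleftrightarrow> lex T p v"
proof -
  obtain a b where ab: "isucc T (meet T v p) a" "isucc T (meet T v p) b" "a \<noteq> b"
    "tle T a v" "tle T b p"
    using branches_of_incomparable[OF v p incomp] by blast
  have "tle T a u" using isucc_below[OF ab(1) u v above ab(4) uv] .
  then have aw: "tle T a w" using tle_trans[OF _ u w] uw ab(1) unfolding isucc_def by blast
  show "meet T w p = meet T v p" using meet_branches[OF ab(1-3) w p aw ab(5)] .
  show "\<not> tle T w p \<and> \<not> tle T p w" using branches_incomparable[OF ab(1-3) w p aw ab(5)] .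
  show "lex T w p \<longleftrightarrow> lex T v p"
    using lex_branches[OF ab(1-3) w p aw ab(5)] lex_branches[OF ab(1-3) v p ab(4,5)] by blast
  show "lex T p w \<longleftrightarrow> lex T p v"
    using lex_branches[OF ab(2,1) ab(3)[symmetric] p w ab(5) aw]
      lex_branches[OF ab(2,1) ab(3)[symmetric] p v ab(5,4)] by blast
qed

end

definition down_closed :: "'a otree \<Rightarrow> 'a set \<Rightarrow> bool" where
  "down_closed T C \<longleftrightarrow> C \<subseteq> carrier T \<and> (\<forall>w\<in>C. \<forall>u\<in>carrier T. tle T u w \<longrightarrow> u \<in> C)"

context tree
begin

context
  fixes C :: "'a set"
  assumes C: "down_closed T C" "C \<noteq> {}"
begin

lemma restrict_in_carrier: "v \<in> C \<Longrightarrow> v \<in> carrier T"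
  using C unfolding down_closed_def by blast

lemma down_closedD: "\<lbrakk>w \<in> C; u \<in> carrier T; tle T u w\<rbrakk> \<Longrightarrow> u \<in> C"
  using C unfolding down_closed_def by blast

lemma root_in_down_closed: "root T \<in> C"
proof -
  obtain c where "c \<in> C" using C(2) by blast
  then show ?thesis using down_closedD root_in_carrier root_tle restrict_in_carrier by blast
qed

lemma is_tree_restrict: "is_tree (T\<lparr>carrier := C\<rparr>)"
proof -
  have sel: "carrier (T\<lparr>carrier := C\<rparr>) = C" "tle (T\<lparr>carrier := C\<rparr>) = tle T" by simp_all
  show ?thesis
    unfolding is_tree_def sel
  proof (intro conjI)
    show "finite C" using finite_carrier restrict_in_carrier by (meson finite_subset subsetI)
    show "\<exists>r\<in>C. \<forall>v\<in>C. tle T r v" using root_in_down_closed root_tle restrict_in_carrier by blast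
    show "\<forall>v\<in>C. tle T v v" using restrict_in_carrier tle_refl by blast
    show "\<forall>v\<in>C. \<forall>w\<in>C. tle T v w \<and> tle T w v \<longrightarrow> v = w"
      using restrict_in_carrier tle_antisym by blast
    show "\<forall>u\<in>C. \<forall>v\<in>C. \<forall>w\<in>C. tle T u v \<and> tle T v w \<longrightarrow> tle T u w"
      using restrict_in_carrier tle_trans by blast
    show "\<forall>w\<in>C. \<forall>u\<in>C. \<forall>v\<in>C. tle T u w \<and> tle T v w \<longrightarrow> tle T u v \<or> tle T v u"
      using restrict_in_carrier tle_chain by blast
  qed (rule C(2))
qed

interpretation restrict: tree "T\<lparr>carrier := C\<rparr>"
  using is_tree_restrict by (rule tree.intro)

lemma root_restrict: "root (T\<lparr>carrier := C\<rparr>) = root T"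
  by (rule restrict.root_unique) (simp_all add: root_in_down_closed root_tle restrict_in_carrier)

lemma meet_restrict:
  assumes "v \<in> C" "w \<in> C"
  shows "meet (T\<lparr>carrier := C\<rparr>) v w = meet T v w"
proof (rule restrict.meet_eqI)
  have vw: "v \<in> carrier T" "w \<in> carrier T" using assms restrict_in_carrier by blast+
  show "meet T v w \<in> carrier (T\<lparr>carrier := C\<rparr>)"
    using down_closedD[OF assms(1) meet_in_carrier[OF vw] meet_tle_left[OF vw]] by simp
qed (simp_all add: assms meet_tle_left meet_tle_right meet_greatest restrict_in_carrier)

lemma succ_toward_restrict:
  assumes "m \<in> C" "v \<in> C"
  shows "succ_toward (T\<lparr>carrier := C\<rparr>) m v = succ_toward T m v"
proof -
  have "isucc (T\<lparr>carrier := C\<rparr>) m c \<longleftrightarrow> isucc T m c" if "tle T c v" for c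
  proof
    assume "isucc (T\<lparr>carrier := C\<rparr>) m c"
    then have c: "c \<in> C" and "tle T m c" "m \<noteq> c"
      and none: "\<not> (\<exists>u\<in>C. tle T m u \<and> tle T u c \<and> u \<noteq> m \<and> u \<noteq> c)"
      unfolding isucc_def by simp_all
    moreover have "\<not> (\<exists>u\<in>carrier T. tle T m u \<and> tle T u c \<and> u \<noteq> m \<and> u \<noteq> c)"
      using none down_closedD[OF c] by blast
    ultimately show "isucc T m c"
      unfolding isucc_def using assms(1) restrict_in_carrier by blast
  next
    assume "isucc T m c"
    moreover have "c \<in> C"
      using \<open>isucc T m c\<close> that down_closedD[OF assms(2)] unfolding isucc_def by blast
    ultimately show "isucc (T\<lparr>carrier := C\<rparr>) m c"
      unfolding isucc_def using assms(1) restrict_in_carrier by auto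
  qed
  then have "(\<lambda>c. isucc (T\<lparr>carrier := C\<rparr>) m c \<and> tle T c v) = (\<lambda>c. isucc T m c \<and> tle T c v)"
    by blast
  then show ?thesis unfolding succ_toward_def by simp
qed

lemma lex_restrict:
  assumes "v \<in> C" "w \<in> C"
  shows "lex (T\<lparr>carrier := C\<rparr>) v w \<longleftrightarrow> lex T v w"
proof -
  have vw: "v \<in> carrier T" "w \<in> carrier T" using assms restrict_in_carrier by blast+
  have "meet T v w \<in> C"
    using down_closedD[OF assms(1) meet_in_carrier[OF vw] meet_tle_left[OF vw]] .
  then show ?thesis
    unfolding lex_def by (simp add: meet_restrict[OF assms] succ_toward_restrict assms)
qed

end

end

locale ordered =
  fixes T :: "'a otree"
  assumes ordered_tree: "ordered_tree T"

sublocale ordered \<subseteq> tree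
  using ordered_tree unfolding ordered_tree_def by unfold_locales blast

context ordered
begin

lemma
  assumes ma: "isucc T m a" and mb: "isucc T m b"
  shows sib_antisym: "\<lbrakk>sib T a b; sib T b a\<rbrakk> \<Longrightarrow> a = b"
    and sib_trans: "\<lbrakk>isucc T m c; sib T a b; sib T b c\<rbrakk> \<Longrightarrow> sib T a c"
    and sib_total: "sib T a b \<or> sib T b a"
proof -
  have "m \<in> carrier T" using ma unfolding isucc_def by blast
  then have sib: "(\<forall>a b. isucc T m a \<and> isucc T m b \<and> sib T a b \<and> sib T b a \<longrightarrow> a = b) \<and>
    (\<forall>a b c. isucc T m a \<and> isucc T m b \<and> isucc T m c \<and> sib T a b \<and> sib T b c \<longrightarrow> sib T a c) \<and>
    (\<forall>a b. isucc T m a \<and> isucc T m b \<longrightarrow> sib T a b \<or> sib T b a)"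
    using ordered_tree unfolding ordered_tree_def by blast
  show "\<lbrakk>sib T a b; sib T b a\<rbrakk> \<Longrightarrow> a = b" "\<lbrakk>isucc T m c; sib T a b; sib T b c\<rbrakk> \<Longrightarrow> sib T a c"
    "sib T a b \<or> sib T b a"
    using sib ma mb by blast+
qed

lemma lex_antisym:
  assumes v: "v \<in> carrier T" and w: "w \<in> carrier T" and "lex T v w" "lex T w v"
  shows "v = w"
proof (cases "tle T v w \<or> tle T w v")
  case True
  then show ?thesis using assms tle_antisym unfolding lex_def by blast
next
  case False
  then obtain a b where ab: "isucc T (meet T v w) a" "isucc T (meet T v w) b" "a \<noteq> b"
    "tle T a v" "tle T b w"
    using branches_of_incomparable[OF v w] by blast
  have "sib T a b" "sib T b a"
    using lex_branches[OF ab(1-3) v w ab(4,5)] lex_branches[OF ab(2,1) ab(3)[symmetric] w v ab(5,4)]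
      assms by blast+
  with ab sib_antisym show ?thesis by blast
qed

lemma lex_total:
  assumes v: "v \<in> carrier T" and w: "w \<in> carrier T"
  shows "lex T v w \<or> lex T w v"
proof (cases "tle T v w \<or> tle T w v")
  case True
  then show ?thesis unfolding lex_def by blast
next
  case False
  then obtain a b where ab: "isucc T (meet T v w) a" "isucc T (meet T v w) b" "a \<noteq> b"
    "tle T a v" "tle T b w"
    using branches_of_incomparable[OF v w] by blast
  then show ?thesis
    using lex_branches[OF ab(1-3) v w ab(4,5)] lex_branches[OF ab(2,1) ab(3)[symmetric] w v ab(5,4)]
      sib_total by blast
qed

lemma lex_trans_incomparable:
  assumes u: "u \<in> carrier T" and v: "v \<in> carrier T" and w: "w \<in> carrier T"
    and uv: "lex T u v" "\<not> tle T u v" "\<not> tle T v u"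
    and vw: "lex T v w" "\<not> tle T v w" "\<not> tle T w v"
  shows "lex T u w"
proof -
  let ?m1 = "meet T u v" and ?m2 = "meet T v w"
  have m1: "?m1 \<in> carrier T" "tle T ?m1 u" "tle T ?m1 v"
    using meet_in_carrier meet_tle_left meet_tle_right u v by blast+
  have m2: "?m2 \<in> carrier T" "tle T ?m2 v" "tle T ?m2 w"
    using meet_in_carrier meet_tle_left meet_tle_right v w by blast+
  consider "tle T ?m1 ?m2" "?m1 \<noteq> ?m2" | "tle T ?m2 ?m1" "?m1 \<noteq> ?m2" | "?m1 = ?m2"
    using tle_chain[OF m1(1) m2(1) v m1(3) m2(2)] by blast
  then show ?thesis
  proof cases
    case 1
    then have "lex T u w \<longleftrightarrow> lex T u v"
      using same_branch_lex_right[OF u v m2(1) w uv(3,2)] m2 meet_commute by metis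
    with uv show ?thesis by blast
  next
    case 2
    then have "lex T u w \<longleftrightarrow> lex T v w"
      using same_branch_lex_left[OF w v m1(1) u vw(2,3)] m1 by metis
    with vw show ?thesis by blast
  next
    case 3
    obtain a b where ab: "isucc T ?m1 a" "isucc T ?m1 b" "a \<noteq> b" "tle T a u" "tle T b v"
      using branches_of_incomparable[OF u v uv(2,3)] by blast
    obtain b' c where bc: "isucc T ?m2 b'" "isucc T ?m2 c" "b' \<noteq> c" "tle T b' v" "tle T c w"
      using branches_of_incomparable[OF v w vw(2,3)] by blast
    have "b' = b" using succ_toward_eq[OF ab(2,5) v] succ_toward_eq[OF bc(1,4) v] 3 by simp
    have sab: "sib T a b" using lex_branches[OF ab(1-3) u v ab(4,5)] uv(1) by blast
    have sbc: "sib T b c" using lex_branches[OF bc(1-3) v w bc(4,5)] vw(1) \<open>b' = b\<close> by blast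
    have "a \<noteq> c" using sib_antisym[OF ab(1,2) sab] sbc ab(3) by blast
    moreover have "sib T a c" using sib_trans[OF ab(1,2) _ sab sbc] bc(2) 3 by simp
    ultimately show ?thesis using lex_branches[OF ab(1) _ _ u w ab(4)] bc(2,5) 3 by simp
  qed
qed

lemma lex_trans:
  assumes u: "u \<in> carrier T" and v: "v \<in> carrier T" and w: "w \<in> carrier T"
    and uv: "lex T u v" and vw: "lex T v w"
  shows "lex T u w"
proof (cases "tle T u w")
  case True
  then show ?thesis unfolding lex_def by blast
next
  case nuw: False
  consider "tle T u v" "tle T v w" | "tle T u v" "\<not> tle T v w" "\<not> tle T w v"
    | "\<not> tle T u v" "\<not> tle T v u" "tle T v w" | "\<not> tle T u v" "\<not> tle T v u" "\<not> tle T v w" "\<not> tle T w v"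
    using uv vw unfolding lex_def by blast
  then show ?thesis
  proof cases
    case 1
    with tle_trans[OF u v w] nuw show ?thesis by blast
  next
    case 2
    let ?m = "meet T v w"
    have m: "?m \<in> carrier T" "tle T ?m v" "tle T ?m w"
      using meet_in_carrier meet_tle_left meet_tle_right v w by blast+
    have "\<not> tle T u ?m" using tle_trans[OF u m(1) w] m(3) nuw by blast
    then have "tle T ?m u" "?m \<noteq> u" using tle_chain[OF u m(1) v 2(1) m(2)] m(3) nuw by auto
    then have "lex T u w \<longleftrightarrow> lex T v w"
      using same_branch_lex_left[OF w v u u 2(2,3)] 2(1) tle_refl[OF u] by blast
    with vw show ?thesis by blast
  next
    case 3
    let ?m = "meet T v u"
    have "tle T ?m v" "?m \<noteq> v" using meet_tle_left[OF v u] meet_tle_right[OF v u] 3(2) by auto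
    then have "lex T u w \<longleftrightarrow> lex T u v"
      using same_branch_lex_right[OF u v v w 3(2,1)] 3(3) tle_refl[OF v] by blast
    with uv show ?thesis by blast
  next
    case 4
    with lex_trans_incomparable[OF u v w uv _ _ vw] show ?thesis by blast
  qed
qed

lemma down_closed_lex_initial:
  assumes "y \<in> carrier T"
  shows "down_closed T {w \<in> carrier T. lex T w y}"
proof -
  have "lex T u y" if "u \<in> carrier T" "w \<in> carrier T" "tle T u w" "lex T w y" for u w
    using lex_trans[OF that(1,2) assms tle_imp_lex[OF that(3)] that(4)] .
  then show ?thesis unfolding down_closed_def by blast
qed

lemma leaf_lex_cases:
  assumes x: "leaf T x" and s: "s \<in> carrier T" and z: "z \<in> carrier T"
    and sz: "tle T s z" and xz: "lex T x z"
  shows "tle T s x \<or> lex T x s"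
proof (rule ccontr)
  assume contra: "\<not> (tle T s x \<or> lex T x s)"
  have xC: "x \<in> carrier T" using leaf_in_carrier[OF x] .
  have "\<not> tle T x s" using x s contra tle_refl unfolding leaf_def by metis
  moreover have "tle T (meet T s x) s" "meet T s x \<noteq> s"
    using meet_tle_left[OF s xC] meet_tle_right[OF s xC] contra by auto
  ultimately have "\<not> tle T z x \<and> \<not> tle T x z" "lex T z x \<longleftrightarrow> lex T s x"
    using same_branch_incomparable[OF xC s s z] same_branch_lex_left[OF xC s s z] contra sz
      tle_refl[OF s] by blast+
  moreover have "lex T s x" using lex_total[OF s xC] contra by blast
  ultimately show False using lex_antisym[OF xC z xz] tle_refl[OF xC] by metis
qed

end

lemma morphism_in_carrier: "\<lbrakk>morphism S T e; u \<in> carrier S\<rbrakk> \<Longrightarrow> e u \<in> carrier T"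
  unfolding morphism_def by blast

lemma morphism_meet:
  "\<lbrakk>morphism S T e; u \<in> carrier S; v \<in> carrier S\<rbrakk> \<Longrightarrow> e (meet S u v) = meet T (e u) (e v)"
  unfolding morphism_def by blast

lemma morphism_lex:
  "\<lbrakk>morphism S T e; u \<in> carrier S; v \<in> carrier S; lex S u v\<rbrakk> \<Longrightarrow> lex T (e u) (e v)"
  unfolding morphism_def by blast

lemma morphism_tle:
  assumes S: "tree S" and T: "tree T" and e: "morphism S T e"
    and u: "u \<in> carrier S" and v: "v \<in> carrier S" and uv: "tle S u v"
  shows "tle T (e u) (e v)"
proof -
  have "e u = e (meet S u v)" using tree.meet_absorb[OF S u v uv] by simp
  also have "\<dots> = meet T (e u) (e v)" using e u v unfolding morphism_def by blast
  finally have "e u = meet T (e u) (e v)" .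
  moreover have "e u \<in> carrier T" "e v \<in> carrier T" using e u v unfolding morphism_def by blast+
  ultimately show ?thesis using tree.meet_tle_right[OF T] by metis
qed

lemma embedding_tle_iff:
  assumes S: "tree S" and T: "tree T" and i: "embedding S T i"
    and u: "u \<in> carrier S" and v: "v \<in> carrier S"
  shows "tle T (i u) (i v) \<longleftrightarrow> tle S u v"
proof
  assume uv: "tle T (i u) (i v)"
  have iuv: "i u \<in> carrier T" "i v \<in> carrier T"
    using i u v unfolding embedding_def morphism_def by blast+
  have "i (meet S u v) = meet T (i u) (i v)"
    using i u v unfolding embedding_def morphism_def by blast
  also have "\<dots> = i u" using tree.meet_absorb[OF T iuv uv] .
  finally have "meet S u v = u"
    using i u tree.meet_in_carrier[OF S u v] unfolding embedding_def inj_on_def by blast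
  then show "tle S u v" using tree.meet_tle_right[OF S u v] by simp
next
  assume "tle S u v"
  then show "tle T (i u) (i v)"
    using morphism_tle[OF S T _ u v] i unfolding embedding_def by blast
qed

lemma injection_of_embedding: "injection_of T S f e \<Longrightarrow> embedding S T e"
  unfolding injection_of_def embedding_def by (auto intro: inj_on_inverseI)

lemma injection_of_restrict:
  assumes S: "tree S" and T: "tree T" and fe: "injection_of T S f e"
    and CS: "down_closed S CS" "CS \<noteq> {}" and CT: "down_closed T CT"
    and eCS: "e ` CS \<subseteq> CT" and fCT: "f ` CT \<subseteq> CS"
  shows "injection_of (T\<lparr>carrier := CT\<rparr>) (S\<lparr>carrier := CS\<rparr>) f e"
proof -
  have CT_ne: "CT \<noteq> {}" using eCS CS(2) by blast
  have sub: "CS \<subseteq> carrier S" "CT \<subseteq> carrier T" using CS CT unfolding down_closed_def by blast+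
  have e: "morphism S T e" and f_e: "\<forall>s\<in>carrier S. f (e s) = s"
    and e_f: "\<forall>w\<in>carrier T. tle T (e (f w)) w"
    using fe unfolding injection_of_def by blast+
  have sel: "carrier (S\<lparr>carrier := CS\<rparr>) = CS" "carrier (T\<lparr>carrier := CT\<rparr>) = CT"
    by simp_all
  have "morphism (S\<lparr>carrier := CS\<rparr>) (T\<lparr>carrier := CT\<rparr>) e"
    unfolding morphism_def sel
  proof (intro conjI ballI impI)
    fix v w assume vw: "v \<in> CS" "w \<in> CS"
    then have evw: "e v \<in> CT" "e w \<in> CT" using eCS by auto
    have "e (meet S v w) = meet T (e v) (e w)" using e vw sub unfolding morphism_def by blast
    then show "e (meet (S\<lparr>carrier := CS\<rparr>) v w) = meet (T\<lparr>carrier := CT\<rparr>) (e v) (e w)"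
      using tree.meet_restrict[OF S CS vw] tree.meet_restrict[OF T CT CT_ne evw] by simp
    assume "lex (S\<lparr>carrier := CS\<rparr>) v w"
    then have "lex S v w" using tree.lex_restrict[OF S CS vw] by simp
    then have "lex T (e v) (e w)" using e vw sub unfolding morphism_def by blast
    then show "lex (T\<lparr>carrier := CT\<rparr>) (e v) (e w)" using tree.lex_restrict[OF T CT CT_ne evw] by simp
  next
    show "e (root (S\<lparr>carrier := CS\<rparr>)) = root (T\<lparr>carrier := CT\<rparr>)"
      using tree.root_restrict[OF S CS] tree.root_restrict[OF T CT CT_ne] e
      unfolding morphism_def by simp
  qed (use eCS in blast)
  then show ?thesis
    unfolding injection_of_def using f_e e_f sub by auto
qed

lemma rigid_surj_restrict:
  assumes "tree S" "tree T" and fe: "injection_of T S f e"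
    and CS: "down_closed S CS" "CS \<noteq> {}" and "down_closed T CT"
    and eCS: "e ` CS \<subseteq> CT" and fCT: "f ` CT \<subseteq> CS"
  shows "f ` CT = CS \<and> rigid_surj (T\<lparr>carrier := CT\<rparr>) (S\<lparr>carrier := CS\<rparr>) f"
proof
  show "f ` CT = CS"
  proof
    show "CS \<subseteq> f ` CT"
    proof
      fix s assume s: "s \<in> CS"
      then have "f (e s) = s" using fe CS(1) unfolding injection_of_def down_closed_def by blast
      with s eCS show "s \<in> f ` CT" by (metis image_eqI image_subset_iff)
    qed
  qed (rule fCT)
  show "rigid_surj (T\<lparr>carrier := CT\<rparr>) (S\<lparr>carrier := CS\<rparr>) f"
    unfolding rigid_surj_def using fCT injection_of_restrict[OF assms] by auto
qed

lemma i_conjugate_leaves: "i_conjugate S T i x y \<Longrightarrow> leaf S x \<and> leaf T y"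
  unfolding i_conjugate_def by blast

context
  fixes S :: "'a otree" and T :: "'b otree" and i :: "'a \<Rightarrow> 'b" and x :: 'a and y :: 'b
  assumes S: "ordered S" and T: "ordered T" and i: "embedding S T i"
    and conj: "i_conjugate S T i x y"
begin

interpretation S: ordered S by (rule S)
interpretation T: ordered T by (rule T)

private lemma i_morphism: "morphism S T i"
  using i unfolding embedding_def by blast

private lemmas x_leaf = conjunct1[OF i_conjugate_leaves[OF conj]]
  and y_leaf = conjunct2[OF i_conjugate_leaves[OF conj]]

private lemmas x_in_carrier = leaf_in_carrier[OF x_leaf]
  and y_in_carrier = leaf_in_carrier[OF y_leaf]
  and i_in_carrier = morphism_in_carrier[OF i_morphism]
  and i_lex = morphism_lex[OF i_morphism]
  and i_meet = morphism_meet[OF i_morphism]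
  and i_tle_iff = embedding_tle_iff[OF S.tree_axioms T.tree_axioms i]

lemma i_conjugate_lex_image: "lex T (i x) y"
proof -
  have ix: "i x \<in> carrier T" using i_in_carrier x_in_carrier .
  obtain z where z: "leaf T z" "tle T (i x) z" using T.leaf_above[OF ix] by blast
  have zC: "z \<in> carrier T" using leaf_in_carrier[OF z(1)] .
  have "lex T z y"
  proof (cases "\<forall>z. leaf S z \<longrightarrow> lex S z x")
    case True
    then show ?thesis using conj z unfolding i_conjugate_def if_P[OF True] by blast
  next
    case False
    then obtain x' where x': "leaf S x'" "lex_less S x x'" "lex_less T y (i x')"
      and sup: "\<forall>z. leaf T z \<and> lex_less T z (i x') \<and> meet T (i x) (i x') = meet T z (i x')
                  \<longrightarrow> lex T z y"
      using conj unfolding i_conjugate_def if_not_P[OF False] by blast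
    have x'C: "x' \<in> carrier S" and ix': "i x' \<in> carrier T"
      using leaf_in_carrier[OF x'(1)] i_in_carrier by blast+
    have "x \<noteq> x'" using x'(2) unfolding lex_less_def by blast
    then have "\<not> tle S x x'" "\<not> tle S x' x"
      using x_leaf x'(1) x'C x_in_carrier unfolding leaf_def by blast+
    then have incomp: "\<not> tle T (i x) (i x')" "\<not> tle T (i x') (i x)"
      using i_tle_iff x_in_carrier x'C by blast+
    have above: "tle T (meet T (i x) (i x')) (i x)" "meet T (i x) (i x') \<noteq> i x"
      using T.meet_tle_left[OF ix ix'] T.meet_tle_right[OF ix ix'] incomp by auto
    have "lex T (i x) (i x')" using i_lex x'(2) x_in_carrier x'C unfolding lex_less_def by blast
    then have "lex_less T z (i x')" "meet T (i x) (i x') = meet T z (i x')"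
      using T.same_branch_lex_left[OF ix' ix ix zC incomp above T.tle_refl[OF ix] z(2)]
        T.same_branch_incomparable[OF ix' ix ix zC incomp above T.tle_refl[OF ix] z(2)]
        T.same_branch_meet[OF ix' ix ix zC incomp above T.tle_refl[OF ix] z(2)]
        T.tle_refl[OF zC] unfolding lex_less_def by auto
    then show ?thesis using sup z(1) by blast
  qed
  then show ?thesis using T.lex_trans[OF ix zC y_in_carrier tle_imp_lex[OF z(2)]] by blast
qed

text \<open>Here \<open>i s\<close> lies in the branch of \<open>i x'\<close> at \<open>meet T y (i x')\<close>, which is to the right of \<open>y\<close>.\<close>

lemma not_lex_conjugate_of_branch:
  assumes x': "leaf S x'" "lex_less T y (i x')" "meet T (i x) (i x') = meet T y (i x')"
    and s: "s \<in> carrier S" and sx': "tle S s x'" and sx: "\<not> tle S s x"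
  shows "\<not> lex T (i s) y"
proof
  assume isy: "lex T (i s) y"
  have x'C: "x' \<in> carrier S" using leaf_in_carrier[OF x'(1)] .
  let ?m = "meet S x x'"
  have mC: "?m \<in> carrier S" and mx: "tle S ?m x" and mx': "tle S ?m x'"
    using S.meet_in_carrier S.meet_tle_left S.meet_tle_right x_in_carrier x'C by blast+
  have "\<not> tle S s ?m" using S.tle_trans[OF s mC x_in_carrier _ mx] sx by blast
  then have ms: "tle S ?m s" "\<not> tle S s ?m" using S.tle_chain[OF s mC x'C sx' mx'] by blast+
  have is_: "i s \<in> carrier T" "i x' \<in> carrier T" "i ?m \<in> carrier T"
    using i_in_carrier s x'C mC by blast+
  have ims: "tle T (i ?m) (i s)" "\<not> tle T (i s) (i ?m)" and isx': "tle T (i s) (i x')"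
    using i_tle_iff ms s mC sx' x'C by blast+
  have im: "i ?m = meet T y (i x')" using i_meet[OF x_in_carrier x'C] x'(3) by simp
  have "\<not> tle T y (i x')"
  proof
    assume "tle T y (i x')"
    then have "y = i ?m" using im T.meet_absorb[OF y_in_carrier is_(2)] by simp
    then show False using ims y_leaf is_(1) T.tle_refl unfolding leaf_def by metis
  qed
  moreover have "\<not> tle T (i x') y"
    using tle_imp_lex T.lex_antisym[OF is_(2) y_in_carrier] x'(2) unfolding lex_less_def by metis
  moreover have "tle T (meet T (i x') y) (i s)" "meet T (i x') y \<noteq> i s"
    using ims im T.meet_commute T.tle_refl[OF is_(1)] by metis+
  ultimately have "\<not> tle T (i s) y" "lex T y (i s)"
    using T.same_branch_incomparable[OF y_in_carrier is_(2) is_(1) is_(1)]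
      T.same_branch_lex_right[OF y_in_carrier is_(2) is_(1) is_(1)]
      isx' T.tle_refl[OF is_(1)] x'(2) unfolding lex_less_def by blast+
  then show False using T.lex_antisym[OF is_(1) y_in_carrier isy] T.tle_refl[OF is_(1)] by blast
qed

lemma i_conjugate_lex_iff:
  assumes s: "s \<in> carrier S"
  shows "lex T (i s) y \<longleftrightarrow> lex S s x"
proof
  assume "lex S s x"
  then have "lex T (i s) (i x)" using i_lex s x_in_carrier by blast
  then show "lex T (i s) y"
    using T.lex_trans i_in_carrier s x_in_carrier y_in_carrier i_conjugate_lex_image by blast
next
  assume isy: "lex T (i s) y"
  obtain z where z: "leaf S z" "tle S s z" using S.leaf_above[OF s] by blast
  have zC: "z \<in> carrier S" using leaf_in_carrier[OF z(1)] .
  show "lex S s x"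
  proof (cases "\<forall>z. leaf S z \<longrightarrow> lex S z x")
    case True
    then show ?thesis using S.lex_trans[OF s zC x_in_carrier tle_imp_lex[OF z(2)]] z(1) by blast
  next
    case False
    then obtain x' where x': "leaf S x'" "lex_less S x x'" "lex_less T y (i x')"
      "meet T (i x) (i x') = meet T y (i x')"
      and least: "\<forall>z. leaf S z \<and> lex_less S x z \<longrightarrow> lex S x' z"
      using conj unfolding i_conjugate_def if_not_P[OF False] by blast
    have x'C: "x' \<in> carrier S" using leaf_in_carrier[OF x'(1)] .
    show ?thesis
    proof (rule ccontr)
      assume nsx: "\<not> lex S s x"
      then have "lex S x z"
        using S.lex_total[OF s x_in_carrier] S.lex_trans[OF x_in_carrier s zC _ tle_imp_lex[OF z(2)]]
        by blast
      moreover have "z \<noteq> x" using nsx z(2) tle_imp_lex by metis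
      ultimately have "lex S x' z" using least z(1) unfolding lex_less_def by blast
      then consider "tle S s x'" | "lex S x' s"
        using S.leaf_lex_cases[OF x'(1) s zC z(2)] by blast
      then show False
      proof cases
        case 1
        then show False
          using not_lex_conjugate_of_branch[OF x'(1,3,4) s 1] nsx isy tle_imp_lex[of S s x] by blast
      next
        case 2
        then have "lex T (i x') y"
          using i_lex[OF x'C s] T.lex_trans i_in_carrier x'C s y_in_carrier isy
          by blast
        then show False
          using T.lex_antisym i_in_carrier[OF x'C] y_in_carrier x'(3)
          unfolding lex_less_def by blast
      qed
    qed
  qed
qed

end

theorem lemma4p14:
  fixes S :: "'a otree" and T :: "'b otree" and f :: "'b \<Rightarrow> 'a"
  assumes "ordered_tree S" and "ordered_tree T"
    and "rigid_surj T S f"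
    and "leaf S x"
    and "f_conjugate T S f x y"
  shows "f ` carrier (subtree_upto T y) = carrier (subtree_upto S x) \<and>
         rigid_surj (subtree_upto T y) (subtree_upto S x) f"
proof -
  interpret S: ordered S using assms(1) by (rule ordered.intro)
  interpret T: ordered T using assms(2) by (rule ordered.intro)
  obtain e where fe: "injection_of T S f e" and conj: "i_conjugate S T e x y"
    using assms(5) unfolding f_conjugate_def by blast
  have lex_iff: "lex T (e s) y \<longleftrightarrow> lex S s x" if "s \<in> carrier S" for s
    using i_conjugate_lex_iff[OF S.ordered_axioms T.ordered_axioms injection_of_embedding[OF fe] conj that] .
  have e_in: "e s \<in> carrier T" if "s \<in> carrier S" for s
    using fe morphism_in_carrier[OF _ that] unfolding injection_of_def by blast
  have xC: "x \<in> carrier S" and yC: "y \<in> carrier T"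
    using i_conjugate_leaves[OF conj] by (simp_all add: leaf_in_carrier)
  define CS where "CS = {s \<in> carrier S. lex S s x}"
  define CT where "CT = {w \<in> carrier T. lex T w y}"
  have "e ` CS \<subseteq> CT" using lex_iff e_in unfolding CS_def CT_def by blast
  moreover have "f w \<in> CS" if w: "w \<in> carrier T" "lex T w y" for w
  proof -
    have fw: "f w \<in> carrier S" using assms(3) w unfolding rigid_surj_def by blast
    have "tle T (e (f w)) w" using fe w unfolding injection_of_def by blast
    then have "lex T (e (f w)) y" using T.lex_trans[OF e_in[OF fw] w(1) yC tle_imp_lex w(2)] by blast
    then show "f w \<in> CS" using lex_iff fw unfolding CS_def by blast
  qed
  then have "f ` CT \<subseteq> CS" unfolding CT_def by blast
  moreover have "CS \<noteq> {}" using xC tle_imp_lex[OF S.tle_refl[OF xC]] unfolding CS_def by blast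
  ultimately show ?thesis
    using rigid_surj_restrict[OF S.tree_axioms T.tree_axioms fe] S.down_closed_lex_initial[OF xC]
      T.down_closed_lex_initial[OF yC]
    unfolding subtree_upto_def CS_def CT_def by auto
qed

end
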